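(* Let $T$ be an $\omega_1$-tree that is not special. Suppose that for every node $u\in T$ of limit height a set $C(T,u)\subseteq\{t\in T:t<u\}$ of order type $\omega$, cofinal below $u$, is given. Let $C\subseteq\omega_1$ be a club. Then there exist $\alpha\in C$, a node $v\in T^\alpha$, and nodes $\{u_n:n\in\omega\}$ of limit height with $v< u_n$ for all $n$, such that the set $\bigcup_{n\in\omega}C(T,u_n)\cap\{t\in T:t<v\}$ is infinite.
   Context: An $\omega_1$-tree is a tree of height $\omega_1$ all of whose levels $T^\alpha$ (nodes of height $\alpha$) are countable. $T$ is special if it is a union of countably many antichains. A club is a closed unbounded subset of $\omega_1$. *)

theory Defs
  imports Main "HOL-Library.Countable_Set"
begin

text \<open>The type 'w of countable ordinals: an uncountable well-order all of whose
proper initial segments are countable (this characterises omega_1 up to isomorphism).\<close>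
definition omega1_type :: "'w::wellorder itself \<Rightarrow> bool" where
  "omega1_type _ \<longleftrightarrow> uncountable (UNIV :: 'w set) \<and> (\<forall>x::'w. countable {y. y < x})"

definition limit_ord :: "'w::wellorder \<Rightarrow> bool" where
  "limit_ord \<alpha> \<longleftrightarrow> (\<exists>\<beta>. \<beta> < \<alpha>) \<and> (\<forall>\<beta><\<alpha>. \<exists>\<gamma>. \<beta> < \<gamma> \<and> \<gamma> < \<alpha>)"

definition club :: "'w::wellorder set \<Rightarrow> bool" where
  "club C \<longleftrightarrow> (\<forall>\<beta>. \<exists>\<gamma>\<in>C. \<beta> \<le> \<gamma>) \<and>
     (\<forall>\<beta>. (\<exists>\<delta>\<in>C. \<delta> < \<beta>) \<and> (\<forall>\<gamma><\<beta>. \<exists>\<delta>\<in>C. \<gamma> < \<delta> \<and> \<delta> < \<beta>) \<longrightarrow> \<beta> \<in> C)"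

text \<open>A tree (T, lt) with height function ht into 'w: lt is a strict partial order on T,
the predecessors of each node are linearly ordered, and ht restricted to the predecessors
of t is an order isomorphism onto {beta. beta < ht t}; hence predecessors are well ordered
and ht t is the height (order type of the predecessors) of t.\<close>
definition tree_ht :: "'a set \<Rightarrow> ('a \<Rightarrow> 'a \<Rightarrow> bool) \<Rightarrow> ('a \<Rightarrow> 'w::wellorder) \<Rightarrow> bool" where
  "tree_ht T lt ht \<longleftrightarrow>
     (\<forall>x\<in>T. \<not> lt x x) \<and>
     (\<forall>x\<in>T. \<forall>y\<in>T. \<forall>z\<in>T. lt x y \<longrightarrow> lt y z \<longrightarrow> lt x z) \<and>
     (\<forall>t\<in>T. \<forall>x\<in>T. \<forall>y\<in>T. lt x t \<longrightarrow> lt y t \<longrightarrow> x = y \<or> lt x y \<or> lt y x) \<and>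
     (\<forall>x\<in>T. \<forall>y\<in>T. lt x y \<longrightarrow> ht x < ht y) \<and>
     (\<forall>t\<in>T. \<forall>\<beta>. \<beta> < ht t \<longrightarrow> (\<exists>s\<in>T. lt s t \<and> ht s = \<beta>))"

definition omega1_tree :: "'a set \<Rightarrow> ('a \<Rightarrow> 'a \<Rightarrow> bool) \<Rightarrow> ('a \<Rightarrow> 'w::wellorder) \<Rightarrow> bool" where
  "omega1_tree T lt ht \<longleftrightarrow> tree_ht T lt ht \<and>
     (\<forall>\<alpha>. {t\<in>T. ht t = \<alpha>} \<noteq> {} \<and> countable {t\<in>T. ht t = \<alpha>})"

definition antichain :: "('a \<Rightarrow> 'a \<Rightarrow> bool) \<Rightarrow> 'a set \<Rightarrow> bool" where
  "antichain lt A \<longleftrightarrow> (\<forall>x\<in>A. \<forall>y\<in>A. \<not> lt x y)"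

definition special :: "'a set \<Rightarrow> ('a \<Rightarrow> 'a \<Rightarrow> bool) \<Rightarrow> bool" where
  "special T lt \<longleftrightarrow> (\<exists>A :: nat \<Rightarrow> 'a set. T = (\<Union>n. A n) \<and> (\<forall>n. antichain lt (A n)))"

definition otype_omega :: "('a \<Rightarrow> 'a \<Rightarrow> bool) \<Rightarrow> 'a set \<Rightarrow> bool" where
  "otype_omega lt X \<longleftrightarrow> (\<exists>f :: nat \<Rightarrow> 'a. bij_betw f UNIV X \<and> (\<forall>m n. m < n \<longrightarrow> lt (f m) (f n)))"

end

theory Submission
  imports Defs
begin

text \<open>Call the trace of a node t the set of nodes below t that lie on the ladder CT u of some
  limit node u above t. Since the predecessors of t are countable, an infinite trace is already
  covered by countably many ladders, so if the theorem fails, every node whose height lies in C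
  has a finite trace. Then T is special: pressing down at such a node of limit height to a ladder
  point above its finite trace, and at any other node to the supremum of C below its height,
  gives a regressive function together with a colouring into \<nat> that separates comparable
  nodes with the same value; the codes of the finite descending paths of this function then split
  T into countably many antichains.\<close>

context
  fixes T :: "'a set" and lt :: "'a \<Rightarrow> 'a \<Rightarrow> bool" and ht :: "'a \<Rightarrow> 'w::wellorder"
  assumes tree: "tree_ht T lt ht"
begin

lemma tree_irrefl: "x \<in> T \<Longrightarrow> \<not> lt x x"
  using tree unfolding tree_ht_def by blast

lemma tree_trans: "x \<in> T \<Longrightarrow> y \<in> T \<Longrightarrow> z \<in> T \<Longrightarrow> lt x y \<Longrightarrow> lt y z \<Longrightarrow> lt x z"
  using tree unfolding tree_ht_def by blast

lemma tree_pred_linear: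
  "t \<in> T \<Longrightarrow> x \<in> T \<Longrightarrow> y \<in> T \<Longrightarrow> lt x t \<Longrightarrow> lt y t \<Longrightarrow> x = y \<or> lt x y \<or> lt y x"
  using tree unfolding tree_ht_def by blast

lemma tree_ht_less: "x \<in> T \<Longrightarrow> y \<in> T \<Longrightarrow> lt x y \<Longrightarrow> ht x < ht y"
  using tree unfolding tree_ht_def by blast

lemma tree_pred_at_height: "t \<in> T \<Longrightarrow> \<beta> < ht t \<Longrightarrow> \<exists>s\<in>T. lt s t \<and> ht s = \<beta>"
  using tree unfolding tree_ht_def by blast

lemma tree_pred_less_if_ht_less:
  assumes "t \<in> T" "x \<in> T" "s \<in> T" "lt x t" "lt s t" "ht x < ht s"
  shows "lt x s"
  using tree_pred_linear[OF assms(1-5)] tree_ht_less[OF assms(3,2)] assms(6) by auto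

lemma countable_predecessors:
  assumes "\<forall>\<alpha>::'w. countable {\<beta>. \<beta> < \<alpha>}" and "t \<in> T"
  shows "countable {x\<in>T. lt x t}"
proof (rule countable_image_inj_on)
  show "countable (ht ` {x\<in>T. lt x t})"
    by (rule countable_subset[OF _ assms(1)[rule_format, of "ht t"]])
       (use tree_ht_less assms(2) in auto)
  show "inj_on ht {x\<in>T. lt x t}"
  proof (rule inj_onI)
    fix x y assume "x \<in> {x\<in>T. lt x t}" "y \<in> {x\<in>T. lt x t}" "ht x = ht y"
    then show "x = y"
      using tree_pred_linear[OF assms(2), of x y] tree_ht_less[of x y] tree_ht_less[of y x] by auto
  qed
qed

text \<open>The code c t = h t # c (f t), read along the f-iterates of t, is injective on chains.\<close>
lemma special_if_regressive_coloring:
  fixes f :: "'a \<Rightarrow> 'a" and h :: "'a \<Rightarrow> nat"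
  assumes regressive: "\<And>s t. s \<in> T \<Longrightarrow> t \<in> T \<Longrightarrow> lt s t \<Longrightarrow> f t \<in> T \<and> lt (f t) t"
    and coloring: "\<And>s t t'. s \<in> T \<Longrightarrow> t \<in> T \<Longrightarrow> t' \<in> T \<Longrightarrow> lt s t \<Longrightarrow> lt t t'
                     \<Longrightarrow> f t = f t' \<Longrightarrow> h t \<noteq> h t'"
  shows "special T lt"
proof -
  define nonmin where "nonmin t \<longleftrightarrow> t \<in> T \<and> (\<exists>s\<in>T. lt s t)" for t
  define R where "R = inv_image {(x::'w, y). x < y} ht"
  have "wf R" unfolding R_def by (rule wf_inv_image) (rule wf)
  define c where "c = wfrec R (\<lambda>c t. if nonmin t then h t # c (f t) else [])"
  have c_nonmin: "c t = h t # c (f t)" if "nonmin t" for t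
  proof -
    have "(f t, t) \<in> R"
      using that regressive tree_ht_less unfolding nonmin_def R_def by auto
    then show ?thesis
      using that by (subst c_def, subst wfrec[OF \<open>wf R\<close>]) (simp add: cut_apply flip: c_def)
  qed
  have c_min: "c t = []" if "\<not> nonmin t" for t
    using that by (subst c_def, subst wfrec[OF \<open>wf R\<close>]) simp
  have c_chain_inj: "c t \<noteq> c t'" if "t \<in> T" "t' \<in> T" "lt t t'" for t t'
    using that
  proof (induction "ht t" arbitrary: t t' rule: less_induct)
    case less
    have "nonmin t'" using less.prems unfolding nonmin_def by blast
    show ?case
    proof (cases "nonmin t")
      case False
      then show ?thesis using c_min c_nonmin[OF \<open>nonmin t'\<close>] by simp
    next
      case True
      then obtain s where s: "s \<in> T" "lt s t" unfolding nonmin_def by blast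
      have ft: "f t \<in> T" "lt (f t) t" and ft': "f t' \<in> T" "lt (f t') t'"
        using regressive s less.prems tree_trans by blast+
      have "lt (f t) t'" using tree_trans ft less.prems by blast
      show ?thesis
      proof
        assume eq: "c t = c t'"
        then have "h t = h t'" and eq_f: "c (f t) = c (f t')"
          using c_nonmin True \<open>nonmin t'\<close> by auto
        then have "f t \<noteq> f t'" using coloring s less.prems by blast
        then consider "lt (f t) (f t')" | "lt (f t') (f t)"
          using tree_pred_linear[OF _ ft(1) ft'(1) \<open>lt (f t) t'\<close> ft'(2)] less.prems by blast
        then show False
        proof cases
          case 1
          then show False
            using less.hyps[of "f t" "f t'"] ft ft' eq_f tree_ht_less less.prems by blast
        next
          case 2
          have "ht (f t') < ht t"
            using 2 ft ft' tree_ht_less less.prems by (meson less_trans)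
          then show False using less.hyps[of "f t'" "f t"] 2 ft ft' eq_f by metis
        qed
      qed
    qed
  qed
  define A where "A n = {t\<in>T. to_nat (c t) = n}" for n
  have "T = (\<Union>n. A n)" unfolding A_def by auto
  moreover have "antichain lt (A n)" for n
    unfolding antichain_def A_def using c_chain_inj by (auto dest: injD[OF inj_to_nat]) metis
  ultimately show ?thesis unfolding special_def by blast
qed

end

lemma limit_ord_bounds_finite:
  fixes \<alpha> :: "'w::wellorder"
  assumes "limit_ord \<alpha>" "finite B" "\<forall>\<beta>\<in>B. \<beta> < \<alpha>"
  shows "\<exists>\<gamma><\<alpha>. \<forall>\<beta>\<in>B. \<beta> < \<gamma>"
proof (cases "B = {}")
  case True
  then show ?thesis using assms(1) unfolding limit_ord_def by blast
next
  case False
  then have "Max B < \<alpha>" using assms(2,3) by simp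
  then obtain \<gamma> where "Max B < \<gamma>" "\<gamma> < \<alpha>" using assms(1) unfolding limit_ord_def by blast
  then show ?thesis using assms(2) by (meson Max_ge le_less_trans)
qed

lemma cofinal_point_above_finite:
  assumes tree: "tree_ht T lt ht"
    and t: "t \<in> T" "limit_ord (ht t)"
    and "L \<subseteq> T" and cofinal: "\<forall>s\<in>T. lt s t \<longrightarrow> (\<exists>c\<in>L. s = c \<or> lt s c)"
    and "finite S" "S \<subseteq> {x\<in>T. lt x t}"
  shows "\<exists>c\<in>L. \<forall>x\<in>S. lt x c"
proof -
  have "\<forall>\<beta>\<in>ht ` S. \<beta> < ht t" using assms(7) tree_ht_less[OF tree] t(1) by auto
  then obtain \<gamma> where \<gamma>: "\<gamma> < ht t" "\<forall>x\<in>S. ht x < \<gamma>"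
    using limit_ord_bounds_finite[OF t(2)] \<open>finite S\<close> by (metis finite_imageI image_eqI)
  obtain s where s: "s \<in> T" "lt s t" "ht s = \<gamma>"
    using tree_pred_at_height[OF tree t(1) \<gamma>(1)] by blast
  obtain c where c: "c \<in> L" "s = c \<or> lt s c" using cofinal s by blast
  have "lt x c" if "x \<in> S" for x
  proof -
    have "lt x s"
      using tree_pred_less_if_ht_less[OF tree t(1) _ s(1) _ s(2)] that \<gamma>(2) s(3) assms(7) by auto
    then show ?thesis using c \<open>L \<subseteq> T\<close> s(1) that assms(7) tree_trans[OF tree] by blast
  qed
  then show ?thesis using c(1) by blast
qed

definition sup_below :: "'w::wellorder set \<Rightarrow> 'w \<Rightarrow> 'w" where
  "sup_below C \<delta> = (LEAST \<beta>. \<forall>\<gamma>\<in>C. \<gamma> < \<delta> \<longrightarrow> \<gamma> \<le> \<beta>)"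

lemma sup_below_upper: "\<gamma> \<in> C \<Longrightarrow> \<gamma> < \<delta> \<Longrightarrow> \<gamma> \<le> sup_below C \<delta>"
  unfolding sup_below_def by (rule LeastI2[of _ \<delta>]) auto

lemma sup_below_le: "sup_below C \<delta> \<le> \<delta>"
  unfolding sup_below_def by (rule Least_le) auto

lemma sup_below_less:
  assumes "club C" "\<beta> < \<delta>" "\<not> (limit_ord \<delta> \<and> \<delta> \<in> C)"
  shows "sup_below C \<delta> < \<delta>"
proof (rule ccontr)
  assume "\<not> sup_below C \<delta> < \<delta>"
  then have sup_eq: "sup_below C \<delta> = \<delta>" using sup_below_le[of C \<delta>] by auto
  have C_cofinal: "\<exists>\<gamma>\<in>C. \<beta>' < \<gamma> \<and> \<gamma> < \<delta>" if "\<beta>' < \<delta>" for \<beta>'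
  proof -
    have "\<not> (\<forall>\<gamma>\<in>C. \<gamma> < \<delta> \<longrightarrow> \<gamma> \<le> \<beta>')"
      using not_less_Least[of \<beta>' "\<lambda>\<beta>. \<forall>\<gamma>\<in>C. \<gamma> < \<delta> \<longrightarrow> \<gamma> \<le> \<beta>"] that sup_eq
      unfolding sup_below_def by auto
    then show ?thesis by (auto simp: not_le)
  qed
  have "limit_ord \<delta>"
    unfolding limit_ord_def using assms(2) C_cofinal by (meson less_trans)
  moreover have "\<delta> \<in> C"
  proof (rule assms(1)[unfolded club_def, THEN conjunct2, rule_format, OF conjI])
    show "\<exists>\<delta>'\<in>C. \<delta>' < \<delta>" using C_cofinal[OF assms(2)] by blast
    show "\<forall>\<gamma><\<delta>. \<exists>\<delta>'\<in>C. \<gamma> < \<delta>' \<and> \<delta>' < \<delta>" using C_cofinal by blast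
  qed
  ultimately show False using assms(3) by blast
qed

lemma omega1_countable_le:
  assumes "omega1_type TYPE('w::wellorder)"
  shows "countable {y::'w. y \<le> \<beta>}"
proof -
  have "{y. y \<le> \<beta>} = insert \<beta> {y. y < \<beta>}" by auto
  then show ?thesis using assms unfolding omega1_type_def by simp
qed

lemma countable_sup_below_fibre:
  assumes "omega1_type TYPE('w::wellorder)" "club (C :: 'w set)"
  shows "countable {\<delta>. sup_below C \<delta> = \<beta>}"
proof -
  have "{y. y \<le> \<beta>} \<noteq> UNIV"
    using omega1_countable_le[OF assms(1), of \<beta>] assms(1) unfolding omega1_type_def by auto
  then obtain y where "\<beta> < y" by (metis UNIV_eq_I mem_Collect_eq not_le)
  moreover obtain m where m: "m \<in> C" "y \<le> m" using assms(2) unfolding club_def by blast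
  ultimately have "\<beta> < m" by simp
  have "{\<delta>. sup_below C \<delta> = \<beta>} \<subseteq> {x. x \<le> m}"
  proof (rule subsetI, rule ccontr)
    fix \<delta> assume "\<delta> \<in> {\<delta>. sup_below C \<delta> = \<beta>}" "\<delta> \<notin> {x. x \<le> m}"
    then show False using sup_below_upper[OF m(1), of \<delta>] \<open>\<beta> < m\<close> by (simp add: not_le)
  qed
  then show ?thesis using omega1_countable_le[OF assms(1)] by (rule countable_subset)
qed

definition ladder_trace ::
    "'a set \<Rightarrow> ('a \<Rightarrow> 'a \<Rightarrow> bool) \<Rightarrow> ('a \<Rightarrow> 'w::wellorder) \<Rightarrow> ('a \<Rightarrow> 'a set) \<Rightarrow> 'a \<Rightarrow> 'a set" where
  "ladder_trace T lt ht CT t =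
     {x\<in>T. lt x t \<and> (\<exists>u\<in>T. limit_ord (ht u) \<and> lt t u \<and> x \<in> CT u)}"

lemma infinite_ladder_trace_witness:
  assumes "countable {x\<in>T. lt x t}" "infinite (ladder_trace T lt ht CT t)"
  shows "\<exists>u :: nat \<Rightarrow> 'a. (\<forall>n. u n \<in> T \<and> limit_ord (ht (u n)) \<and> lt t (u n)) \<and>
           infinite ((\<Union>n. CT (u n)) \<inter> {s\<in>T. lt s t})"
proof -
  let ?S = "ladder_trace T lt ht CT t"
  have "countable ?S"
    using assms(1) by (rule countable_subset[rotated]) (auto simp: ladder_trace_def)
  moreover have "?S \<noteq> {}" using assms(2) by auto
  ultimately have enum: "range (from_nat_into ?S) = ?S" by simp
  have "\<forall>x\<in>?S. \<exists>u. u \<in> T \<and> limit_ord (ht u) \<and> lt t u \<and> x \<in> CT u"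
    by (auto simp: ladder_trace_def)
  then obtain w where w: "\<forall>x\<in>?S. w x \<in> T \<and> limit_ord (ht (w x)) \<and> lt t (w x) \<and> x \<in> CT (w x)"
    by (rule bchoice[THEN exE])
  define u where "u n = w (from_nat_into ?S n)" for n
  have "\<forall>n. u n \<in> T \<and> limit_ord (ht (u n)) \<and> lt t (u n)"
    using w enum unfolding u_def by blast
  moreover have "?S \<subseteq> (\<Union>n. CT (u n)) \<inter> {s\<in>T. lt s t}"
  proof
    fix x assume x: "x \<in> ?S"
    then obtain n where "x = from_nat_into ?S n" using enum by blast
    then show "x \<in> (\<Union>n. CT (u n)) \<inter> {s\<in>T. lt s t}"
      using w x unfolding u_def by (auto simp: ladder_trace_def)
  qed
  then have "infinite ((\<Union>n. CT (u n)) \<inter> {s\<in>T. lt s t})"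
    using assms(2) finite_subset by blast
  ultimately show ?thesis by blast
qed

text \<open>Two nodes t < t' of limit height in C never choose the same ladder point, since a point
  of CT t' below t lies in the trace of t. Other nodes descend to the height sup_below C (ht t);
  the heights with a given value of sup_below form a countable set, and the index of ht t in it
  separates these nodes.\<close>
lemma special_if_finite_ladder_traces:
  fixes T :: "'a set" and lt :: "'a \<Rightarrow> 'a \<Rightarrow> bool" and ht :: "'a \<Rightarrow> 'w::wellorder"
    and CT :: "'a \<Rightarrow> 'a set" and C :: "'w set"
  assumes omega1: "omega1_type TYPE('w)" and tree: "tree_ht T lt ht"
    and ladders: "\<forall>u\<in>T. limit_ord (ht u) \<longrightarrow>
           CT u \<subseteq> {t\<in>T. lt t u} \<and> (\<forall>s\<in>T. lt s u \<longrightarrow> (\<exists>c\<in>CT u. s = c \<or> lt s c))"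
    and "club C"
    and finite_traces: "\<And>t. t \<in> T \<Longrightarrow> ht t \<in> C \<Longrightarrow> finite (ladder_trace T lt ht CT t)"
  shows "special T lt"
proof -
  define S where "S = ladder_trace T lt ht CT"
  define L where "L t \<longleftrightarrow> limit_ord (ht t) \<and> ht t \<in> C" for t
  define N where "N = {t\<in>T. (\<exists>s\<in>T. lt s t) \<and> \<not> L t}"
  have "\<exists>c\<in>CT t. \<forall>x\<in>S t. lt x c" if "t \<in> T" "L t" for t
  proof (rule cofinal_point_above_finite[OF tree \<open>t \<in> T\<close>])
    show "limit_ord (ht t)" using \<open>L t\<close> unfolding L_def by blast
    then show "CT t \<subseteq> T" "\<forall>s\<in>T. lt s t \<longrightarrow> (\<exists>c\<in>CT t. s = c \<or> lt s c)"
      using ladders \<open>t \<in> T\<close> by auto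
    show "finite (S t)" using finite_traces \<open>t \<in> T\<close> \<open>L t\<close> unfolding S_def L_def by blast
    show "S t \<subseteq> {x\<in>T. lt x t}" unfolding S_def ladder_trace_def by blast
  qed
  then have "\<forall>t\<in>{t\<in>T. L t}. \<exists>c. c \<in> CT t \<and> (\<forall>x\<in>S t. lt x c)" by blast
  then obtain g where g: "\<forall>t\<in>{t\<in>T. L t}. g t \<in> CT t \<and> (\<forall>x\<in>S t. lt x (g t))"
    by (rule bchoice[THEN exE])
  have "\<forall>t\<in>N. \<exists>p. p \<in> T \<and> lt p t \<and> ht p = sup_below C (ht t)"
    using tree_pred_at_height[OF tree] sup_below_less[OF \<open>club C\<close>] tree_ht_less[OF tree]
    unfolding N_def L_def by blast
  then obtain p where p: "\<forall>t\<in>N. p t \<in> T \<and> lt (p t) t \<and> ht (p t) = sup_below C (ht t)"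
    by (rule bchoice[THEN exE])
  define f where "f t = (if L t then g t else p t)" for t
  define fibre where "fibre t = {\<delta>. sup_below C \<delta> = sup_below C (ht t)}" for t
  define h where "h t = (if L t then 0 else Suc (to_nat_on (fibre t) (ht t)))" for t
  show ?thesis
  proof (rule special_if_regressive_coloring[OF tree])
    fix s t assume "s \<in> T" "t \<in> T" "lt s t"
    show "f t \<in> T \<and> lt (f t) t"
    proof (cases "L t")
      case True
      then have "g t \<in> CT t" "limit_ord (ht t)" using g \<open>t \<in> T\<close> unfolding L_def by auto
      then show ?thesis using ladders True \<open>t \<in> T\<close> unfolding f_def by auto
    next
      case False
      then have "t \<in> N" using \<open>s \<in> T\<close> \<open>t \<in> T\<close> \<open>lt s t\<close> unfolding N_def by blast
      then show ?thesis using p False unfolding f_def by simp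
    qed
  next
    fix s t t' assume st: "s \<in> T" "t \<in> T" "t' \<in> T" "lt s t" "lt t t'" and "f t = f t'"
    consider "L t" "L t'" | "L t \<noteq> L t'" | "\<not> L t" "\<not> L t'" by blast
    then show "h t \<noteq> h t'"
    proof cases
      case 1
      have g_t: "g t \<in> CT t" "\<forall>x\<in>S t. lt x (g t)" using g st(2) 1(1) by auto
      then have "g t \<in> T" "lt (g t) t" using ladders st(2) 1(1) unfolding L_def by auto
      moreover have "g t \<in> CT t'" using g st(3) 1 \<open>f t = f t'\<close> unfolding f_def by auto
      ultimately have "g t \<in> S t" using st 1(2) unfolding S_def ladder_trace_def L_def by blast
      then show ?thesis using g_t(2) tree_irrefl[OF tree \<open>g t \<in> T\<close>] by blast
    next
      case 2
      then show ?thesis unfolding h_def by auto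
    next
      case 3
      have "t \<in> N" "t' \<in> N" using st 3 tree_trans[OF tree] unfolding N_def by blast+
      then have "sup_below C (ht t) = ht (p t)" "ht (p t') = sup_below C (ht t')"
        using p by auto
      moreover have "p t = p t'" using \<open>f t = f t'\<close> 3 unfolding f_def by simp
      ultimately have "sup_below C (ht t) = sup_below C (ht t')" by simp
      then have "fibre t = fibre t'" unfolding fibre_def by simp
      moreover have "ht t \<noteq> ht t'" using tree_ht_less[OF tree st(2,3,5)] by simp
      moreover have "inj_on (to_nat_on (fibre t)) (fibre t)"
        unfolding fibre_def by (rule inj_on_to_nat_on[OF countable_sup_below_fibre[OF omega1 \<open>club C\<close>]])
      ultimately show ?thesis using 3 unfolding h_def by (auto simp: fibre_def dest: inj_onD)
    qed
  qed
qed

theorem mainTheorem4: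
  fixes T :: "'a set" and lt :: "'a \<Rightarrow> 'a \<Rightarrow> bool" and ht :: "'a \<Rightarrow> 'w::wellorder"
    and CT :: "'a \<Rightarrow> 'a set" and C :: "'w set"
  assumes "omega1_type TYPE('w)"
    and "omega1_tree T lt ht"
    and "\<not> special T lt"
    and "\<forall>u\<in>T. limit_ord (ht u) \<longrightarrow>
           CT u \<subseteq> {t\<in>T. lt t u} \<and> otype_omega lt (CT u) \<and>
           (\<forall>s\<in>T. lt s u \<longrightarrow> (\<exists>c\<in>CT u. s = c \<or> lt s c))"
    and "club C"
  shows "\<exists>\<alpha>\<in>C. \<exists>v\<in>T. ht v = \<alpha> \<and>
           (\<exists>u :: nat \<Rightarrow> 'a. (\<forall>n. u n \<in> T \<and> limit_ord (ht (u n)) \<and> lt v (u n)) \<and>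
              infinite ((\<Union>n. CT (u n)) \<inter> {t\<in>T. lt t v}))"
proof -
  have tree: "tree_ht T lt ht" using assms(2) unfolding omega1_tree_def by blast
  have "\<exists>v\<in>T. ht v \<in> C \<and> infinite (ladder_trace T lt ht CT v)"
  proof (rule ccontr)
    assume "\<not> ?thesis"
    then have "special T lt"
      using special_if_finite_ladder_traces[OF assms(1) tree _ assms(5), of CT] assms(4) by blast
    then show False using assms(3) by blast
  qed
  then obtain v where v: "v \<in> T" "ht v \<in> C" "infinite (ladder_trace T lt ht CT v)" by blast
  have "countable {x\<in>T. lt x v}"
    using countable_predecessors[OF tree _ v(1)] assms(1) unfolding omega1_type_def by blast
  then show ?thesis using infinite_ladder_trace_witness[OF _ v(3)] v(1,2) by blast
qed

end
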